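(* Let $n\in\mathbb{N}$ and let $f\colon[0,1]^n\to[0,1]$ be an aggregation function. Let $[0,1]^n_*$ be the set of $\mathbf{a}\in[0,1]^n$ with $\mathbf{a}\neq(0,\dots,0)$ and $\mathbf{a}\neq(1,\dots,1)$, and for $\mathbf{a}=(a_0,\dots,a_{n-1})\in[0,1]^n_*$ put $J_{\mathbf{a}}=\{i:a_i\neq0\}$ and $h^f_{\mathbf{a}}(\mathbf{x})=G^n_{f(\mathbf{a})}(\mathbf{x})\wedge\bigwedge_{i\in J_{\mathbf{a}}}\chi_{a_i}(x_i)$. Then $f(\mathbf{x})=\bigvee_{\mathbf{a}\in[0,1]^n_*}h^f_{\mathbf{a}}(\mathbf{x})$ for all $\mathbf{x}\in[0,1]^n$.
   Context: An $n$-ary aggregation function on $[0,1]$ is a function $f\colon[0,1]^n\to[0,1]$ nondecreasing in each coordinate with $f(0,\dots,0)=0$ and $f(1,\dots,1)=1$. For $a\in[0,1]$, $\chi_a(x)=1$ if $x\ge a$ and $x\neq0$, and $\chi_a(x)=0$ otherwise. $\mathsf{Med}_b(x,y)$ is the median of $x,y,b$. For $b\in[0,1]$, $G^n_b\colon[0,1]^n\to[0,1]$ is defined inductively by $G^1_b(x_0)=\mathsf{Med}_b(\chi_0(x_0),\chi_1(x_0))$, $G^2_b(x_0,x_1)=\mathsf{Med}_b(\chi_0(x_0\vee x_1),\chi_1(x_0\wedge x_1))$, $G^{n+1}_b(x_0,\dots,x_n)=G^2_b(G^n_b(x_0,\dots,x_{n-1}),x_n)$ for $n\ge2$. *)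

theory Defs
  imports Complex_Main
begin

text \<open>Points of [0,1]^n are represented as real lists of length n,
  x = [x_0, ..., x_(n-1)].\<close>

definition unit_cube :: "nat \<Rightarrow> real list set" where
  "unit_cube n = {x. length x = n \<and> (\<forall>i<n. 0 \<le> x ! i \<and> x ! i \<le> 1)}"

definition aggregation_function :: "nat \<Rightarrow> (real list \<Rightarrow> real) \<Rightarrow> bool" where
  "aggregation_function n f \<longleftrightarrow>
     (\<forall>x\<in>unit_cube n. 0 \<le> f x \<and> f x \<le> 1) \<and>
     (\<forall>x\<in>unit_cube n. \<forall>y\<in>unit_cube n. (\<forall>i<n. x ! i \<le> y ! i) \<longrightarrow> f x \<le> f y) \<and>
     f (replicate n 0) = 0 \<and> f (replicate n 1) = 1"

definition chi :: "real \<Rightarrow> real \<Rightarrow> real" where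
  "chi a x = (if a \<le> x \<and> x \<noteq> 0 then 1 else 0)"

definition Med :: "real \<Rightarrow> real \<Rightarrow> real \<Rightarrow> real" where
  "Med b x y = max (min x y) (min (max x y) b)"

definition G2 :: "real \<Rightarrow> real \<Rightarrow> real \<Rightarrow> real" where
  "G2 b x0 x1 = Med b (chi 0 (max x0 x1)) (chi 1 (min x0 x1))"

text \<open>G b [x0,...,x_(n-1)] is G^n_b(x0,...,x_(n-1)) for n \<ge> 1; the value on [] is irrelevant.\<close>
fun G :: "real \<Rightarrow> real list \<Rightarrow> real" where
  "G b [] = 0"
| "G b [x0] = Med b (chi 0 x0) (chi 1 x0)"
| "G b (x0 # x1 # rest) = foldl (G2 b) (G2 b x0 x1) rest"

definition cube_star :: "nat \<Rightarrow> real list set" where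
  "cube_star n = {a \<in> unit_cube n. a \<noteq> replicate n 0 \<and> a \<noteq> replicate n 1}"

definition J :: "real list \<Rightarrow> nat set" where
  "J a = {i. i < length a \<and> a ! i \<noteq> 0}"

definition h :: "(real list \<Rightarrow> real) \<Rightarrow> real list \<Rightarrow> real list \<Rightarrow> real" where
  "h f a x = Min (insert (G (f a) x) ((\<lambda>i. chi (a ! i) (x ! i)) ` J a))"

end

theory Submission
  imports Defs
begin

text \<open>For n \<ge> 1 and b \<in> [0,1], G^n_b takes the value 0 at the origin, 1 at the top
  vertex and b everywhere else. Hence h^f_a(x) \<le> f(x): either some coordinate x_i with
  i \<in> J_a lies below a_i, which kills the factor \<chi>_{a_i}(x_i), or a \<le> x and monotonicity gives
  f(a) \<le> f(x). The supremum is attained at a = x when x \<in> [0,1]^n_*, and at any a at the two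
  excluded vertices.\<close>

definition G_closed :: "real \<Rightarrow> real list \<Rightarrow> real" where
  "G_closed b p = (if set p \<subseteq> {0} then 0 else if set p \<subseteq> {1} then 1 else b)"

lemma G2_G_closed_snoc:
  assumes "p \<noteq> []" "set p \<subseteq> {0..1}" "v \<in> {0..1}" "b \<in> {0..1}"
  shows "G2 b (G_closed b p) v = G_closed b (p @ [v])"
proof -
  have "\<not> (set p \<subseteq> {0} \<and> set p \<subseteq> {1})"
    using assms(1) by (cases p) auto
  then show ?thesis
    using assms unfolding G_closed_def G2_def Med_def chi_def by (auto simp: max_def min_def)
qed

lemma foldl_G2_G_closed:
  assumes "p \<noteq> []" "set p \<subseteq> {0..1}" "set r \<subseteq> {0..1}" "b \<in> {0..1}"
  shows "foldl (G2 b) (G_closed b p) r = G_closed b (p @ r)"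
  using assms
proof (induction r arbitrary: p)
  case Nil
  then show ?case by simp
next
  case (Cons v r)
  have "G2 b (G_closed b p) v = G_closed b (p @ [v])"
    using Cons.prems by (intro G2_G_closed_snoc) auto
  moreover have "foldl (G2 b) (G_closed b (p @ [v])) r = G_closed b ((p @ [v]) @ r)"
    using Cons.prems by (intro Cons.IH) auto
  ultimately show ?case by simp
qed

lemma G_eq_G_closed:
  assumes "x \<noteq> []" "set x \<subseteq> {0..1}" "b \<in> {0..1}"
  shows "G b x = G_closed b x"
proof (cases "(b, x)" rule: G.cases)
  case (1 b')
  then show ?thesis using assms by simp
next
  case (2 b' x0)
  then show ?thesis using assms by (auto simp: G_closed_def Med_def chi_def)
next
  case (3 b' x0 x1 rest)
  have "G2 b x0 x1 = G_closed b [x0, x1]"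
    using assms 3 unfolding G_closed_def G2_def Med_def chi_def by (auto simp: max_def min_def)
  then have "G b x = foldl (G2 b) (G_closed b [x0, x1]) rest" using 3 by simp
  also have "\<dots> = G_closed b ([x0, x1] @ rest)"
    using assms 3 by (intro foldl_G2_G_closed) auto
  finally show ?thesis using 3 by simp
qed

lemma G_unit_cube:
  assumes "x \<in> unit_cube n" "n \<noteq> 0" "b \<in> {0..1}"
  shows "G b x = (if x = replicate n 0 then 0 else if x = replicate n 1 then 1 else b)"
proof -
  have "length x = n" "set x \<subseteq> {0..1}"
    using assms(1) by (auto simp: unit_cube_def in_set_conv_nth)
  then have "G b x = G_closed b x"
    using assms(2,3) by (intro G_eq_G_closed) auto
  moreover have "set x \<subseteq> {c} \<longleftrightarrow> x = replicate n c" for c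
  proof
    show "set x \<subseteq> {c} \<Longrightarrow> x = replicate n c"
      using \<open>length x = n\<close> by (auto intro: replicate_eqI)
    show "x = replicate n c \<Longrightarrow> set x \<subseteq> {c}"
      by (simp add: set_replicate_conv_if)
  qed
  ultimately show ?thesis by (simp add: G_closed_def)
qed

lemma h_le_G: "h f a x \<le> G (f a) x"
  unfolding h_def by (rule Min_le) (auto simp: J_def)

lemma h_le_chi: "i \<in> J a \<Longrightarrow> h f a x \<le> chi (a ! i) (x ! i)"
  unfolding h_def by (rule Min_le) (auto simp: J_def)

lemma h_nonneg: "0 \<le> G (f a) x \<Longrightarrow> 0 \<le> h f a x"
  unfolding h_def by (subst Min_ge_iff) (auto simp: J_def chi_def)

lemma h_eq_G:
  assumes "G (f a) x \<le> 1" "\<And>i. i \<in> J a \<Longrightarrow> a ! i \<le> x ! i \<and> x ! i \<noteq> 0"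
  shows "h f a x = G (f a) x"
  unfolding h_def using assms by (intro Min_eqI) (auto simp: J_def chi_def)

lemma aggregation_function_dim_nonzero: "aggregation_function n f \<Longrightarrow> n \<noteq> 0"
  by (cases n) (auto simp: aggregation_function_def)

lemma h_le_aggregation_function:
  assumes f: "aggregation_function n f" and a: "a \<in> cube_star n" and x: "x \<in> unit_cube n"
  shows "h f a x \<le> f x"
proof (cases "\<forall>i\<in>J a. a ! i \<le> x ! i")
  case True
  have "a \<in> unit_cube n" using a by (simp add: cube_star_def)
  moreover have "\<forall>i<n. a ! i \<le> x ! i"
    using True a x by (auto simp: J_def cube_star_def unit_cube_def)
  ultimately have "f a \<le> f x"
    using f x by (auto simp: aggregation_function_def)
  moreover have "0 \<le> f x" "f a \<in> {0..1}"
    using f x \<open>a \<in> unit_cube n\<close> by (auto simp: aggregation_function_def)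
  moreover have "f (replicate n 0) = 0" "f (replicate n 1) = 1"
    using f by (auto simp: aggregation_function_def)
  ultimately have "G (f a) x \<le> f x"
    using x aggregation_function_dim_nonzero[OF f] by (auto simp: G_unit_cube)
  then show ?thesis using h_le_G order_trans by blast
next
  case False
  then obtain i where "i \<in> J a" "\<not> a ! i \<le> x ! i" by auto
  then have "h f a x \<le> 0" using h_le_chi[of i a f x] by (simp add: chi_def)
  also have "0 \<le> f x" using f x by (simp add: aggregation_function_def)
  finally show ?thesis .
qed

lemma h_attains_aggregation_function:
  assumes f: "aggregation_function n f" and x: "x \<in> unit_cube n"
  shows "\<exists>a\<in>cube_star n. h f a x = f x"
proof -
  have n: "n \<noteq> 0" using aggregation_function_dim_nonzero[OF f] .
  have range: "\<And>z. z \<in> unit_cube n \<Longrightarrow> f z \<in> {0..1}"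
    and f0: "f (replicate n 0) = 0" and f1: "f (replicate n 1) = 1"
    using f by (auto simp: aggregation_function_def)
  have half: "replicate n (1/2) \<in> cube_star n"
    using n by (auto simp: cube_star_def unit_cube_def list_eq_iff_nth_eq)
  have G_at: "G (f a) x = (if x = replicate n 0 then 0 else if x = replicate n 1 then 1 else f a)"
    if "a \<in> cube_star n" for a
    using that x n range by (intro G_unit_cube) (auto simp: cube_star_def)
  consider "x = replicate n 0" | "x = replicate n 1" | "x \<in> cube_star n"
    using x by (auto simp: cube_star_def)
  then show ?thesis
  proof cases
    case 1
    then have "h f (replicate n (1/2)) x = 0"
      using G_at[OF half] h_le_G[of f _ x] h_nonneg[of f _ x] by (metis order_antisym order_refl)
    then show ?thesis using half 1 f0 by (intro bexI) auto
  next
    case 2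
    then have "h f (replicate n (1/2)) x = 1"
      using G_at[OF half] n by (subst h_eq_G) (auto simp: J_def)
    then show ?thesis using half 2 f1 by (intro bexI) auto
  next
    case 3
    then have "h f x x = f x"
      using G_at[OF 3] range[OF x] by (subst h_eq_G) (auto simp: J_def cube_star_def)
    then show ?thesis using 3 by blast
  qed
qed

theorem lemma3:
  fixes n :: nat and f :: "real list \<Rightarrow> real"
  assumes "aggregation_function n f"
  shows "\<forall>x\<in>unit_cube n. f x = (SUP a\<in>cube_star n. h f a x)"
proof
  fix x assume x: "x \<in> unit_cube n"
  obtain a where "a \<in> cube_star n" "h f a x = f x"
    using h_attains_aggregation_function[OF assms x] by blast
  moreover have "\<And>a. a \<in> cube_star n \<Longrightarrow> h f a x \<le> f x"
    using h_le_aggregation_function[OF assms _ x] .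
  ultimately show "f x = (SUP a\<in>cube_star n. h f a x)"
    by (intro cSup_eq_maximum[symmetric]) (auto intro: image_eqI[where x=a])
qed

end
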